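(* Let $\mathcal{M}\subseteq \mathcal{L}_n^+$ be a linear Markov model. Then $\mathcal{M}=\operatorname{span}_{\mathbb{R}}(\mathcal{M})\cap \mathcal{L}_n^+$, and the following are equivalent: (1) $\mathcal{M}$ is uniformization stable; (2) $\operatorname{span}_{\mathbb{R}}(\mathcal{M})$ is a Jordan algebra, i.e. $AB+BA\in \operatorname{span}_{\mathbb{R}}(\mathcal{M})$ for all $A,B\in \operatorname{span}_{\mathbb{R}}(\mathcal{M})$.
   Context: Let $n\ge 1$, let $\mathbf{1}\in\mathbb{R}^n$ be the all-ones column vector and $I_n$ the identity matrix. Let $\mathcal{L}_n=\{Q\in \mathrm{Mat}_n(\mathbb{R}): Q\mathbf{1}=0\}$ be the zero row sum matrices. A rate matrix is a $Q\in\mathcal{L}_n$ whose off-diagonal entries are all nonnegative; $\mathcal{L}_n^+$ denotes the set of rate matrices. A Markov model is any subset $\mathcal{M}\subseteq\mathcal{L}_n^+$; it is linear if $\mathcal{M}=\mathcal{L}\cap\mathcal{L}_n^+$ for some linear subspace $\mathcal{L}\subseteq\mathcal{L}_n$. A Markov model $\mathcal{M}$ is uniformization stable if for every $Q\in\mathcal{M}$ and every $t\ge 0$ there exists $\hat Q\in\mathcal{M}$ with $e^{Qt}-I_n=\hat Q$. A linear subspace of $\mathrm{Mat}_n(\mathbb{R})$ is a (matrix) Jordan algebra if it is closed under the product $A\odot B:=AB+BA$. *)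

theory Defs
  imports "HOL-Analysis.Analysis"
begin

text \<open>n x n real matrices are rendered as real^'n^'n, with n = CARD('n) arbitrary.\<close>

definition zero_row_sum :: "(real^'n^'n) set" where
  "zero_row_sum = {Q. Q *v (\<chi> i. 1) = 0}"

definition rate_matrices :: "(real^'n^'n) set" where
  "rate_matrices = {Q. Q \<in> zero_row_sum \<and> (\<forall>i j. i \<noteq> j \<longrightarrow> 0 \<le> Q $ i $ j)}"

definition linear_markov_model :: "(real^'n^'n) set \<Rightarrow> bool" where
  "linear_markov_model M \<longleftrightarrow>
     (\<exists>L. subspace L \<and> L \<subseteq> zero_row_sum \<and> M = L \<inter> rate_matrices)"

primrec matpow :: "real^'n^'n \<Rightarrow> nat \<Rightarrow> real^'n^'n" where
  "matpow A 0 = mat 1"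
| "matpow A (Suc k) = matpow A k ** A"

definition mexp :: "real^'n^'n \<Rightarrow> real^'n^'n" where
  "mexp A = (\<Sum>k. (1 / fact k) *\<^sub>R matpow A k)"

definition uniformization_stable :: "(real^'n^'n) set \<Rightarrow> bool" where
  "uniformization_stable M \<longleftrightarrow>
     (\<forall>Q\<in>M. \<forall>t::real. t \<ge> 0 \<longrightarrow> (\<exists>Qh\<in>M. mexp (t *\<^sub>R Q) - mat 1 = Qh))"

definition jordan_algebra :: "(real^'n^'n) set \<Rightarrow> bool" where
  "jordan_algebra S \<longleftrightarrow> subspace S \<and> (\<forall>A\<in>S. \<forall>B\<in>S. A ** B + B ** A \<in> S)"

end

(*
  (1) implies (2): span M is a closed subspace containing (2 / t^2) (e^(tQ) - I - tQ) for all
  t > 0 and Q in M, and these matrices tend to Q^2 as t goes to 0.  Since M is closed under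
  addition, the polarization AB + BA = (A + B)^2 - A^2 - B^2 gives the Jordan product of
  elements of M, and bilinearity extends it to span M.

  (2) implies (1): in a Jordan algebra Q^(k+1) = (Q^k Q + Q Q^k) / 2 stays in the subspace, so
  e^(tQ) - I, the sum of the series t^k Q^k / k! over k >= 1, lies in the closed subspace span M.
  It is also a rate matrix: with d large, Q + dI is entrywise nonnegative and
  e^(tQ) = e^(-dt) e^(t(Q + dI)).  Hence e^(tQ) - I lies in span M intersected with the rate
  matrices, which is M.
*)
theory Submission
  imports Defs
begin

lemma matrix_add_rdistrib: "(B + C) ** A = B ** A + C ** A"
  for A :: "'a::semiring_1^'p^'m" and B C :: "'a^'m^'n"
  by (vector matrix_matrix_mult_def sum.distrib[symmetric] field_simps)

lemma matrix_scaleR_right: "A ** (k *\<^sub>R B) = k *\<^sub>R (A ** B)"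
  for A :: "real^'m^'n" and B :: "real^'p^'m"
  by (simp add: matrix_scalar_ac scalar_matrix_assoc)

lemma matrix_sum_left: "sum f S ** A = (\<Sum>x\<in>S. f x ** A)"
  for f :: "'s \<Rightarrow> real^'m^'n" and A :: "real^'p^'m"
  by (induction S rule: infinite_finite_induct) (simp_all add: matrix_add_rdistrib)

lemma matpow_scaleR: "matpow (t *\<^sub>R A) k = t ^ k *\<^sub>R matpow A k"
  by (induction k) (simp_all add: matrix_scaleR_right scalar_matrix_assoc[symmetric])

lemma matpow_commute: "matpow A k ** A = A ** matpow A k"
  by (induction k) (simp_all add: matrix_mul_assoc[symmetric])

lemma matpow_nonneg:
  assumes "\<And>i j. 0 \<le> R $ i $ j"
  shows "0 \<le> matpow R k $ i $ j"
  using assms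
  by (induction k arbitrary: i j) (simp_all add: mat_def matrix_matrix_mult_def sum_nonneg)

lemma matpow_add_scaled_id:
  fixes R :: "real^'n^'n"
  shows "matpow (R + c *\<^sub>R mat 1) k = (\<Sum>j\<le>k. (real (k choose j) * c ^ (k - j)) *\<^sub>R matpow R j)"
proof (induction k)
  case 0
  then show ?case by simp
next
  case (Suc k)
  define b where "b k j = real (k choose j) * c ^ (k - j)" for k j
  have shifted: "(\<Sum>j\<le>k. (c * b k j) *\<^sub>R matpow R j)
      = c ^ Suc k *\<^sub>R mat 1 + (\<Sum>j\<le>k. (real (k choose Suc j) * c ^ (k - j)) *\<^sub>R matpow R (Suc j))"
  proof -
    have "(\<Sum>j\<le>k. (c * b k j) *\<^sub>R matpow R j) = (\<Sum>j\<le>Suc k. (real (k choose j) * c ^ (Suc k - j)) *\<^sub>R matpow R j)"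
      by (auto simp: b_def Suc_diff_le mult_ac intro!: sum.cong)
    also have "\<dots> = c ^ Suc k *\<^sub>R mat 1 + (\<Sum>j\<le>k. (real (k choose Suc j) * c ^ (k - j)) *\<^sub>R matpow R (Suc j))"
      by (subst sum.atMost_Suc_shift) simp
    finally show ?thesis .
  qed
  have "matpow (R + c *\<^sub>R mat 1) (Suc k) = (\<Sum>j\<le>k. b k j *\<^sub>R matpow R j) ** (R + c *\<^sub>R mat 1)"
    using Suc by (simp add: b_def)
  also have "\<dots> = (\<Sum>j\<le>k. b k j *\<^sub>R matpow R (Suc j)) + (\<Sum>j\<le>k. (c * b k j) *\<^sub>R matpow R j)"
    by (simp only: matrix_add_ldistrib matrix_sum_left matrix_scaleR_right
        scalar_matrix_assoc[symmetric] scaleR_sum_right scaleR_scaleR matpow.simps matrix_mul_rid)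
  also have "\<dots> = c ^ Suc k *\<^sub>R mat 1 + (\<Sum>j\<le>k. b (Suc k) (Suc j) *\<^sub>R matpow R (Suc j))"
    unfolding shifted by (simp add: b_def sum.distrib[symmetric] scaleR_add_left[symmetric] distrib_right add_ac)
  also have "\<dots> = (\<Sum>j\<le>Suc k. b (Suc k) j *\<^sub>R matpow R j)"
    by (subst sum.atMost_Suc_shift) (simp add: b_def)
  finally show ?case by (simp add: b_def)
qed

section \<open>The exponential series\<close>

definition l1_norm :: "real^'m^'n \<Rightarrow> real" where
  "l1_norm A = (\<Sum>i\<in>UNIV. \<Sum>j\<in>UNIV. \<bar>A $ i $ j\<bar>)"

lemma l1_norm_nonneg: "0 \<le> l1_norm A"
  unfolding l1_norm_def by (intro sum_nonneg) auto

lemma norm_le_l1_norm: "norm A \<le> l1_norm A"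
proof -
  have "norm A \<le> (\<Sum>i\<in>UNIV. norm (A $ i))"
    by (simp add: norm_vec_def L2_set_le_sum)
  also have "\<dots> \<le> l1_norm A"
    unfolding l1_norm_def by (intro sum_mono norm_le_l1_cart)
  finally show ?thesis .
qed

lemma l1_norm_mult: "l1_norm (A ** B) \<le> l1_norm A * l1_norm B"
  for A :: "real^'m^'n" and B :: "real^'p^'m"
proof -
  have row: "(\<Sum>j\<in>UNIV. \<bar>B $ k $ j\<bar>) \<le> l1_norm B" for k
    unfolding l1_norm_def by (rule member_le_sum) (auto intro: sum_nonneg)
  have "l1_norm (A ** B) = (\<Sum>i\<in>UNIV. \<Sum>j\<in>UNIV. \<bar>\<Sum>k\<in>UNIV. A $ i $ k * B $ k $ j\<bar>)"
    unfolding l1_norm_def matrix_matrix_mult_def by simp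
  also have "\<dots> \<le> (\<Sum>i\<in>UNIV. \<Sum>j\<in>UNIV. \<Sum>k\<in>UNIV. \<bar>A $ i $ k\<bar> * \<bar>B $ k $ j\<bar>)"
    by (intro sum_mono order_trans[OF sum_abs]) (simp add: abs_mult)
  also have "\<dots> = (\<Sum>i\<in>UNIV. \<Sum>k\<in>UNIV. \<bar>A $ i $ k\<bar> * (\<Sum>j\<in>UNIV. \<bar>B $ k $ j\<bar>))"
    by (rule sum.cong[OF refl], subst sum.swap) (simp add: sum_distrib_left)
  also have "\<dots> \<le> (\<Sum>i\<in>UNIV. \<Sum>k\<in>UNIV. \<bar>A $ i $ k\<bar> * l1_norm B)"
    by (intro sum_mono mult_left_mono row) auto
  also have "\<dots> = l1_norm A * l1_norm B"
    unfolding l1_norm_def by (simp add: sum_distrib_right)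
  finally show ?thesis .
qed

lemma l1_norm_matpow_le: "l1_norm (matpow A k) \<le> l1_norm (mat 1 :: real^'n^'n) * l1_norm A ^ k"
  for A :: "real^'n^'n"
proof (induction k)
  case 0
  then show ?case by simp
next
  case (Suc k)
  have "l1_norm (matpow A k ** A) \<le> l1_norm (matpow A k) * l1_norm A"
    by (rule l1_norm_mult)
  also have "\<dots> \<le> l1_norm (mat 1 :: real^'n^'n) * l1_norm A ^ k * l1_norm A"
    using Suc l1_norm_nonneg[of A] by (intro mult_right_mono) auto
  finally show ?case by (simp add: mult_ac)
qed

definition mexp_term :: "real^'n^'n \<Rightarrow> real \<Rightarrow> nat \<Rightarrow> real^'n^'n" where
  "mexp_term A t k = (t ^ k / fact k) *\<^sub>R matpow A k"

lemma mexp_scaleR_eq_suminf: "mexp (t *\<^sub>R A) = (\<Sum>k. mexp_term A t k)"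
  unfolding mexp_def mexp_term_def matpow_scaleR by simp

lemma norm_mexp_term_le:
  "norm (mexp_term A t k) \<le> l1_norm (mat 1 :: real^'n^'n) * ((\<bar>t\<bar> * l1_norm A) ^ k / fact k)"
  for A :: "real^'n^'n"
proof -
  have "norm (mexp_term A t k) = (\<bar>t\<bar> ^ k / fact k) * norm (matpow A k)"
    by (simp add: mexp_term_def power_abs)
  also have "\<dots> \<le> (\<bar>t\<bar> ^ k / fact k) * (l1_norm (mat 1 :: real^'n^'n) * l1_norm A ^ k)"
    by (intro mult_left_mono order_trans[OF norm_le_l1_norm l1_norm_matpow_le]) auto
  finally show ?thesis by (simp add: power_mult_distrib field_simps)
qed

lemma summable_scaled_exp: "summable (\<lambda>k. c * (x ^ k / fact k))" for c x :: real
  using summable_mult[OF summable_exp[of x]] by (simp add: field_simps)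

lemma summable_norm_mexp_term: "summable (\<lambda>k. norm (mexp_term A t k))"
  for A :: "real^'n^'n"
  by (rule summable_norm_comparison_test[OF exI[of _ 0] summable_scaled_exp])
    (use norm_mexp_term_le in blast)

lemma summable_mexp_term: "summable (mexp_term A t)"
  using summable_norm_mexp_term by (rule summable_norm_cancel)

lemma suminf_in_closed_subspace:
  fixes f :: "nat \<Rightarrow> 'a::real_normed_vector"
  assumes "closed S" "subspace S" "summable f" "\<And>n. f n \<in> S"
  shows "suminf f \<in> S"
proof (rule Lim_in_closed_set[OF assms(1) _ trivial_limit_sequentially summable_LIMSEQ[OF assms(3)]])
  show "\<forall>\<^sub>F n in sequentially. (\<Sum>i<n. f i) \<in> S"
    using assms(2,4) by (intro always_eventually allI subspace_sum) auto
qed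

lemma abs_entry_le_norm: "\<bar>A $ i $ j\<bar> \<le> norm A"
  for A :: "real^'m^'n"
  using component_le_norm_cart Finite_Cartesian_Product.norm_nth_le by (rule order_trans)

lemma mexp_entry: "mexp (t *\<^sub>R A) $ i $ j = (\<Sum>k. mexp_term A t k $ i $ j)"
  for A :: "real^'n^'n"
proof -
  have "bounded_linear (\<lambda>B :: real^'n^'n. B $ i $ j)"
    using bounded_linear_compose[OF bounded_linear_vec_nth[of j] bounded_linear_vec_nth[of i]] by simp
  then show ?thesis
    unfolding mexp_scaleR_eq_suminf by (rule bounded_linear.suminf[OF _ summable_mexp_term])
qed

lemma summable_norm_mexp_term_entry: "summable (\<lambda>k. norm (mexp_term A t k $ i $ j))"
  for A :: "real^'n^'n"
  by (rule summable_comparison_test[OF _ summable_norm_mexp_term])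
    (auto intro!: exI[of _ 0] abs_entry_le_norm)

lemma mexp_minus_id_mem_closed_subspace:
  fixes Q :: "real^'n^'n"
  assumes "closed S" "subspace S" "\<And>k. matpow Q (Suc k) \<in> S"
  shows "mexp (t *\<^sub>R Q) - mat 1 \<in> S"
proof -
  have "mexp (t *\<^sub>R Q) = (\<Sum>k. mexp_term Q t (Suc k)) + mexp_term Q t 0"
    using suminf_split_initial_segment[OF summable_mexp_term[of Q t], where k = 1]
    by (simp add: mexp_scaleR_eq_suminf)
  then have "mexp (t *\<^sub>R Q) - mat 1 = (\<Sum>k. mexp_term Q t (Suc k))"
    by (simp add: mexp_term_def)
  also have "\<dots> \<in> S"
  proof (rule suminf_in_closed_subspace[OF assms(1,2)])
    show "summable (\<lambda>k. mexp_term Q t (Suc k))"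
      using summable_mexp_term by (rule summable_ignore_initial_segment[of _ 1, simplified])
    show "mexp_term Q t (Suc k) \<in> S" for k
      unfolding mexp_term_def using assms(2,3) by (rule subspace_scale)
  qed
  finally show ?thesis .
qed

lemma norm_mexp_second_order_remainder:
  fixes Q :: "real^'n^'n"
  obtains K where "\<And>t. 0 < t \<Longrightarrow> t \<le> 1 \<Longrightarrow>
    norm (mexp (t *\<^sub>R Q) - (mat 1 + t *\<^sub>R Q + (t\<^sup>2 / 2) *\<^sub>R (Q ** Q))) \<le> K * t ^ 3"
proof
  define b where "b k = l1_norm (mat 1 :: real^'n^'n) * (l1_norm Q ^ k / fact k)" for k
  have summable_b: "summable (\<lambda>k. b (k + 3))"
    unfolding b_def by (rule summable_ignore_initial_segment[OF summable_scaled_exp])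
  fix t :: real
  assume "0 < t" "t \<le> 1"
  have summable_tail: "summable (\<lambda>k. norm (mexp_term Q t (k + 3)))"
    by (rule summable_ignore_initial_segment[OF summable_norm_mexp_term])
  have tail_le: "norm (mexp_term Q t (k + 3)) \<le> t ^ 3 * b (k + 3)" for k
  proof -
    have "norm (mexp_term Q t (k + 3)) \<le> t ^ (k + 3) * b (k + 3)"
      using norm_mexp_term_le[of Q t "k + 3"] \<open>0 < t\<close>
      by (simp add: b_def power_mult_distrib field_simps)
    also have "\<dots> \<le> t ^ 3 * b (k + 3)"
      using \<open>0 < t\<close> \<open>t \<le> 1\<close>
      by (intro mult_right_mono power_decreasing) (auto simp: b_def l1_norm_nonneg)
    finally show ?thesis .
  qed
  have "mexp (t *\<^sub>R Q) = (\<Sum>k. mexp_term Q t (k + 3)) + (\<Sum>k<3. mexp_term Q t k)"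
    unfolding mexp_scaleR_eq_suminf by (rule suminf_split_initial_segment[OF summable_mexp_term])
  then have "norm (mexp (t *\<^sub>R Q) - (mat 1 + t *\<^sub>R Q + (t\<^sup>2 / 2) *\<^sub>R (Q ** Q)))
      = norm (\<Sum>k. mexp_term Q t (k + 3))"
    by (simp add: mexp_term_def eval_nat_numeral)
  also have "\<dots> \<le> (\<Sum>k. norm (mexp_term Q t (k + 3)))"
    by (rule summable_norm[OF summable_tail])
  also have "\<dots> \<le> (\<Sum>k. t ^ 3 * b (k + 3))"
    by (rule suminf_le[OF tail_le summable_tail summable_mult[OF summable_b]])
  also have "\<dots> = (\<Sum>k. b (k + 3)) * t ^ 3"
    by (simp add: suminf_mult[OF summable_b] mult.commute)
  finally show "norm (mexp (t *\<^sub>R Q) - (mat 1 + t *\<^sub>R Q + (t\<^sup>2 / 2) *\<^sub>R (Q ** Q)))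
      \<le> (\<Sum>k. b (k + 3)) * t ^ 3" .
qed

lemma tendsto_mexp_second_difference_quotient:
  fixes Q :: "real^'n^'n"
  shows "((\<lambda>t. (2 / t\<^sup>2) *\<^sub>R (mexp (t *\<^sub>R Q) - mat 1 - t *\<^sub>R Q)) \<longlongrightarrow> Q ** Q) (at_right 0)"
proof -
  obtain K where K: "\<And>t. 0 < t \<Longrightarrow> t \<le> 1 \<Longrightarrow>
      norm (mexp (t *\<^sub>R Q) - (mat 1 + t *\<^sub>R Q + (t\<^sup>2 / 2) *\<^sub>R (Q ** Q))) \<le> K * t ^ 3"
    using norm_mexp_second_order_remainder[of Q] by blast
  have "((\<lambda>t. (2 / t\<^sup>2) *\<^sub>R (mexp (t *\<^sub>R Q) - mat 1 - t *\<^sub>R Q) - Q ** Q) \<longlongrightarrow> 0) (at_right 0)"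
  proof (rule Lim_null_comparison)
    show "\<forall>\<^sub>F t in at_right 0. norm ((2 / t\<^sup>2) *\<^sub>R (mexp (t *\<^sub>R Q) - mat 1 - t *\<^sub>R Q) - Q ** Q)
        \<le> 2 * K * t"
    proof (rule eventually_at_rightI[of 0 1])
      fix t :: real
      assume "t \<in> {0<..<1}"
      then have t: "0 < t" "t < 1" by auto
      have "(2 / t\<^sup>2) *\<^sub>R (mexp (t *\<^sub>R Q) - mat 1 - t *\<^sub>R Q) - Q ** Q
          = (2 / t\<^sup>2) *\<^sub>R (mexp (t *\<^sub>R Q) - (mat 1 + t *\<^sub>R Q + (t\<^sup>2 / 2) *\<^sub>R (Q ** Q)))"
        using t by (simp add: algebra_simps)
      also have "norm \<dots> \<le> (2 / t\<^sup>2) * (K * t ^ 3)"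
        using K[of t] t by (simp add: divide_right_mono)
      also have "\<dots> = 2 * K * t"
        using t by (simp add: power2_eq_square power3_eq_cube)
      finally show "norm ((2 / t\<^sup>2) *\<^sub>R (mexp (t *\<^sub>R Q) - mat 1 - t *\<^sub>R Q) - Q ** Q) \<le> 2 * K * t" .
    qed simp
    show "((\<lambda>t. 2 * K * t) \<longlongrightarrow> 0) (at_right 0)"
      by (auto intro!: tendsto_eq_intros)
  qed
  then show ?thesis
    by (rule LIM_zero_cancel)
qed

lemma square_mem_closed_subspace:
  fixes Q :: "real^'n^'n"
  assumes "closed S" "subspace S" "Q \<in> S"
    and "\<And>t. 0 < t \<Longrightarrow> mexp (t *\<^sub>R Q) - mat 1 \<in> S"
  shows "Q ** Q \<in> S"
proof (rule Lim_in_closed_set[OF assms(1) _ _ tendsto_mexp_second_difference_quotient])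
  show "\<forall>\<^sub>F t in at_right 0. (2 / t\<^sup>2) *\<^sub>R (mexp (t *\<^sub>R Q) - mat 1 - t *\<^sub>R Q) \<in> S"
    using eventually_at_right_less[of 0]
  proof (rule eventually_mono)
    fix t :: real
    assume "0 < t"
    then have "mexp (t *\<^sub>R Q) - mat 1 \<in> S"
      by (rule assms(4))
    then show "(2 / t\<^sup>2) *\<^sub>R (mexp (t *\<^sub>R Q) - mat 1 - t *\<^sub>R Q) \<in> S"
      using assms(2,3) by (blast intro: subspace_scale subspace_diff)
  qed
qed simp

section \<open>Exponentials of rate matrices\<close>

lemma mexp_nonneg:
  fixes R :: "real^'n^'n"
  assumes "\<And>i j. 0 \<le> R $ i $ j" and "0 \<le> t"
  shows "0 \<le> mexp (t *\<^sub>R R) $ i $ j"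
  unfolding mexp_entry
  using summable_norm_cancel[OF summable_norm_mexp_term_entry]
  by (rule suminf_nonneg) (simp add: mexp_term_def assms matpow_nonneg)

lemma mexp_term_add_scaled_id:
  fixes R :: "real^'n^'n"
  shows "mexp_term (R + c *\<^sub>R mat 1) t k
    = (\<Sum>j\<le>k. ((c * t) ^ (k - j) / fact (k - j)) *\<^sub>R mexp_term R t j)"
  unfolding mexp_term_def matpow_add_scaled_id scaleR_sum_right scaleR_scaleR
proof (rule sum.cong[OF refl])
  fix j assume "j \<in> {..k}"
  then have "j \<le> k" by simp
  then have "t ^ k = t ^ j * t ^ (k - j)" by (simp add: power_add[symmetric])
  with \<open>j \<le> k\<close> show "(t ^ k / fact k * (real (k choose j) * c ^ (k - j))) *\<^sub>R matpow R j
      = ((c * t) ^ (k - j) / fact (k - j) * (t ^ j / fact j)) *\<^sub>R matpow R j"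
    by (simp add: binomial_fact power_mult_distrib field_simps)
qed

lemma mexp_add_scaled_id:
  fixes R :: "real^'n^'n"
  shows "mexp (t *\<^sub>R (R + c *\<^sub>R mat 1)) = exp (c * t) *\<^sub>R mexp (t *\<^sub>R R)"
proof (rule vec_eq_iff[THEN iffD2, rule_format], rule vec_eq_iff[THEN iffD2, rule_format])
  fix i j
  define x where "x k = mexp_term R t k $ i $ j" for k
  define y where "y k = (c * t) ^ k /\<^sub>R fact k" for k
  have "mexp (t *\<^sub>R (R + c *\<^sub>R mat 1)) $ i $ j = (\<Sum>k. \<Sum>l\<le>k. x l * y (k - l))"
    unfolding mexp_entry mexp_term_add_scaled_id by (simp add: x_def y_def field_simps)
  also have "\<dots> = (\<Sum>k. x k) * (\<Sum>k. y k)"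
    unfolding x_def y_def
    by (rule Cauchy_product[symmetric, OF summable_norm_mexp_term_entry summable_norm_exp])
  also have "\<dots> = exp (c * t) * mexp (t *\<^sub>R R) $ i $ j"
    by (simp add: x_def y_def mexp_entry exp_def)
  finally show "mexp (t *\<^sub>R (R + c *\<^sub>R mat 1)) $ i $ j = (exp (c * t) *\<^sub>R mexp (t *\<^sub>R R)) $ i $ j"
    by simp
qed

lemma mexp_nonneg_if_offdiag_nonneg:
  fixes Q :: "real^'n^'n"
  assumes offdiag: "\<And>i j. i \<noteq> j \<Longrightarrow> 0 \<le> Q $ i $ j" and "0 \<le> t"
  shows "0 \<le> mexp (t *\<^sub>R Q) $ i $ j"
proof -
  define d where "d = l1_norm Q"
  define R where "R = Q + d *\<^sub>R mat 1"
  have diag: "\<bar>Q $ i $ i\<bar> \<le> d" for i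
    unfolding d_def using abs_entry_le_norm norm_le_l1_norm by (rule order_trans)
  have "0 \<le> R $ i $ j" for i j
    using offdiag[of i j] diag[of i] by (cases "i = j") (auto simp: R_def mat_def)
  then have "0 \<le> mexp (t *\<^sub>R R) $ i $ j"
    using \<open>0 \<le> t\<close> by (rule mexp_nonneg)
  moreover have "mexp (t *\<^sub>R Q) = exp (- d * t) *\<^sub>R mexp (t *\<^sub>R R)"
    using mexp_add_scaled_id[of t R "- d"] by (simp add: R_def)
  ultimately show ?thesis
    by simp
qed

lemma subspace_zero_row_sum: "subspace zero_row_sum"
  unfolding subspace_def zero_row_sum_def
  by (simp add: matrix_vector_mult_add_rdistrib scaleR_matrix_vector_assoc[symmetric])

lemma matrix_mult_mem_zero_row_sum: "B \<in> zero_row_sum \<Longrightarrow> A ** B \<in> zero_row_sum"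
  by (simp add: zero_row_sum_def matrix_vector_mul_assoc[symmetric])

lemma mexp_minus_id_mem_rate_matrices:
  fixes Q :: "real^'n^'n"
  assumes "Q \<in> rate_matrices" and "0 \<le> t"
  shows "mexp (t *\<^sub>R Q) - mat 1 \<in> rate_matrices"
  unfolding rate_matrices_def
proof (intro CollectI conjI allI impI)
  have "matpow Q (Suc k) \<in> zero_row_sum" for k
    using assms(1) by (simp add: rate_matrices_def matrix_mult_mem_zero_row_sum)
  then show "mexp (t *\<^sub>R Q) - mat 1 \<in> zero_row_sum"
    using subspace_zero_row_sum
    by (intro mexp_minus_id_mem_closed_subspace closed_subspace)
  fix i j :: 'n
  assume "i \<noteq> j"
  moreover have "0 \<le> mexp (t *\<^sub>R Q) $ i $ j"
    using assms by (intro mexp_nonneg_if_offdiag_nonneg) (auto simp: rate_matrices_def)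
  ultimately show "0 \<le> (mexp (t *\<^sub>R Q) - mat 1) $ i $ j"
    by (simp add: mat_def)
qed

lemma rate_matrices_add: "A \<in> rate_matrices \<Longrightarrow> B \<in> rate_matrices \<Longrightarrow> A + B \<in> rate_matrices"
  unfolding rate_matrices_def zero_row_sum_def by (simp add: matrix_vector_mult_add_rdistrib)

section \<open>Jordan algebras\<close>

lemma bilinear_mem_subspace_span:
  assumes "bilinear h" "subspace S" "\<And>x y. x \<in> B \<Longrightarrow> y \<in> B \<Longrightarrow> h x y \<in> S"
    and "x \<in> span B" "y \<in> span B"
  shows "h x y \<in> S"
proof -
  have right: "h x y \<in> S" if "x \<in> B" "y \<in> span B" for x y
    using \<open>y \<in> span B\<close>
  proof (rule span_induct)
    show "subspace {y. h x y \<in> S}"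
      using linear_subspace_vimage[of "h x" S] assms(1,2) by (simp add: bilinear_def vimage_def)
  qed (use assms(3) \<open>x \<in> B\<close> in blast)
  show ?thesis
    using \<open>x \<in> span B\<close>
  proof (rule span_induct)
    show "subspace {x. h x y \<in> S}"
      using linear_subspace_vimage[of "\<lambda>x. h x y" S] assms(1,2) by (simp add: bilinear_def vimage_def)
  qed (use right \<open>y \<in> span B\<close> in blast)
qed

lemma bilinear_anticommutator: "bilinear (\<lambda>A B :: real^'n^'n. A ** B + B ** A)"
  unfolding bilinear_def linear_iff
  by (simp add: matrix_add_ldistrib matrix_add_rdistrib matrix_scaleR_right
      scalar_matrix_assoc[symmetric] algebra_simps)

lemma jordan_algebra_span_iff:
  fixes M :: "(real^'n^'n) set"
  shows "jordan_algebra (span M) \<longleftrightarrow> (\<forall>A\<in>M. \<forall>B\<in>M. A ** B + B ** A \<in> span M)"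
proof
  assume "jordan_algebra (span M)"
  then show "\<forall>A\<in>M. \<forall>B\<in>M. A ** B + B ** A \<in> span M"
    by (simp add: jordan_algebra_def span_base)
next
  assume "\<forall>A\<in>M. \<forall>B\<in>M. A ** B + B ** A \<in> span M"
  then show "jordan_algebra (span M)"
    using bilinear_mem_subspace_span[OF bilinear_anticommutator subspace_span[of M], of M]
    by (simp add: jordan_algebra_def)
qed

lemma matpow_mem_jordan_algebra:
  fixes Q :: "real^'n^'n"
  assumes "jordan_algebra S" "Q \<in> S"
  shows "matpow Q (Suc k) \<in> S"
proof (induction k)
  case 0
  then show ?case using assms(2) by simp
next
  case (Suc k)
  define P where "P = matpow Q (Suc k)"
  have "P ** Q + Q ** P \<in> S"
    using assms Suc by (simp add: jordan_algebra_def P_def)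
  moreover have "Q ** P = P ** Q"
    unfolding P_def by (rule matpow_commute[symmetric])
  ultimately have "2 *\<^sub>R (P ** Q) \<in> S"
    by (simp only: scaleR_2)
  then have "(1 / 2) *\<^sub>R (2 *\<^sub>R (P ** Q)) \<in> S"
    using assms(1) unfolding jordan_algebra_def by (blast intro: subspace_scale)
  then show ?case by (simp add: P_def)
qed

lemma anticommutator_polarization: "A ** B + B ** A = (A + B) ** (A + B) - A ** A - B ** B"
  for A B :: "real^'n^'n"
  by (simp add: matrix_add_ldistrib matrix_add_rdistrib)

lemma square_mem_span_if_uniformization_stable:
  fixes M :: "(real^'n^'n) set"
  assumes "uniformization_stable M" "Q \<in> M"
  shows "Q ** Q \<in> span M"
proof (rule square_mem_closed_subspace[OF closed_subspace[OF subspace_span] subspace_span span_base[OF assms(2)]])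
  show "mexp (t *\<^sub>R Q) - mat 1 \<in> span M" if "0 < t" for t
    using assms that unfolding uniformization_stable_def by (auto intro: span_base)
qed

theorem mainTheorem1:
  fixes M :: "(real^'n^'n) set"
  assumes "linear_markov_model M"
  shows "M = span M \<inter> rate_matrices
         \<and> (uniformization_stable M \<longleftrightarrow> jordan_algebra (span M))"
proof -
  obtain L where L: "subspace L" "L \<subseteq> zero_row_sum" "M = L \<inter> rate_matrices"
    using assms unfolding linear_markov_model_def by blast
  have "span M \<subseteq> L"
    using L by (intro span_minimal) auto
  then have M_eq: "M = span M \<inter> rate_matrices"
    using L(3) span_superset[of M] by blast
  have "uniformization_stable M \<longleftrightarrow> jordan_algebra (span M)"
  proof
    assume stable: "uniformization_stable M"
    have "A + B \<in> M" if "A \<in> M" "B \<in> M" for A B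
      using that L by (auto simp: subspace_add rate_matrices_add)
    then show "jordan_algebra (span M)"
      unfolding jordan_algebra_span_iff anticommutator_polarization
      by (blast intro: subspace_diff[OF subspace_span] square_mem_span_if_uniformization_stable[OF stable])
  next
    assume jordan: "jordan_algebra (span M)"
    show "uniformization_stable M"
      unfolding uniformization_stable_def
    proof (intro ballI allI impI)
      fix Q and t :: real
      assume "Q \<in> M" "0 \<le> t"
      have "mexp (t *\<^sub>R Q) - mat 1 \<in> span M"
        using matpow_mem_jordan_algebra[OF jordan span_base[OF \<open>Q \<in> M\<close>]]
        by (rule mexp_minus_id_mem_closed_subspace[OF closed_subspace[OF subspace_span] subspace_span])
      moreover have "mexp (t *\<^sub>R Q) - mat 1 \<in> rate_matrices"
        using \<open>Q \<in> M\<close> \<open>0 \<le> t\<close> L(3) by (intro mexp_minus_id_mem_rate_matrices) auto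
      ultimately show "\<exists>Qh\<in>M. mexp (t *\<^sub>R Q) - mat 1 = Qh"
        using M_eq by blast
    qed
  qed
  with M_eq show ?thesis by blast
qed

end
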